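(* Let $n\ge 3$ be an odd integer and $k\ge 3$ an integer. Then $\psi(C_n\square P_k)=3$, i.e. the minimum size of a doubly resolving set of the cartesian product $C_n\square P_k$ is $3$.
   Context: All graphs are finite and connected; $d(u,v)$ is the shortest-path distance. $C_n$ is the cycle on $n$ vertices and $P_k$ the path on $k$ vertices. The cartesian product $G\square H$ has vertex set $V(G)\times V(H)$, with $(g_1,h_1)$ adjacent to $(g_2,h_2)$ iff either $h_1=h_2$ and $g_1g_2\in E(G)$, or $g_1=g_2$ and $h_1h_2\in E(H)$. For an ordered set $Q=\{q_1,\dots,q_l\}$ of vertices, $r(x|Q)=(d(x,q_1),\dots,d(x,q_l))$. $Q$ is a doubly resolving set of $G$ if for any two distinct vertices $x,y$ of $G$, $r(x|Q)-r(y|Q)\neq\lambda(1,\dots,1)$ for every integer $\lambda$. $\psi(G)$ denotes the minimum size of a doubly resolving set of $G$. *)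

theory Defs
  imports Main
begin

definition is_walk :: "('a \<Rightarrow> 'a \<Rightarrow> bool) \<Rightarrow> 'a set \<Rightarrow> 'a list \<Rightarrow> bool" where
  "is_walk E V xs \<longleftrightarrow> xs \<noteq> [] \<and> set xs \<subseteq> V \<and>
     (\<forall>i. Suc i < length xs \<longrightarrow> E (xs ! i) (xs ! Suc i))"

definition gdist :: "'a set \<Rightarrow> ('a \<Rightarrow> 'a \<Rightarrow> bool) \<Rightarrow> 'a \<Rightarrow> 'a \<Rightarrow> nat" where
  "gdist V E u v = (LEAST m. \<exists>xs. is_walk E V xs \<and> hd xs = u \<and> last xs = v \<and> length xs = Suc m)"

definition doubly_resolving :: "'a set \<Rightarrow> ('a \<Rightarrow> 'a \<Rightarrow> bool) \<Rightarrow> 'a set \<Rightarrow> bool" where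
  "doubly_resolving V E Q \<longleftrightarrow> Q \<subseteq> V \<and>
     (\<forall>x\<in>V. \<forall>y\<in>V. x \<noteq> y \<longrightarrow>
        \<not> (\<exists>lam::int. \<forall>q\<in>Q. int (gdist V E x q) - int (gdist V E y q) = lam))"

definition psi :: "'a set \<Rightarrow> ('a \<Rightarrow> 'a \<Rightarrow> bool) \<Rightarrow> nat" where
  "psi V E = (LEAST m. \<exists>Q. finite Q \<and> card Q = m \<and> doubly_resolving V E Q)"

definition cycle_V :: "nat \<Rightarrow> nat set" where "cycle_V n = {0..<n}"
definition cycle_E :: "nat \<Rightarrow> nat \<Rightarrow> nat \<Rightarrow> bool" where
  "cycle_E n i j \<longleftrightarrow> i < n \<and> j < n \<and> ((i + 1) mod n = j \<or> (j + 1) mod n = i)"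

definition path_V :: "nat \<Rightarrow> nat set" where "path_V k = {0..<k}"
definition path_E :: "nat \<Rightarrow> nat \<Rightarrow> nat \<Rightarrow> bool" where
  "path_E k i j \<longleftrightarrow> i < k \<and> j < k \<and> (i + 1 = j \<or> j + 1 = i)"

definition cprod_V :: "'a set \<Rightarrow> 'b set \<Rightarrow> ('a \<times> 'b) set" where
  "cprod_V VG VH = VG \<times> VH"
definition cprod_E :: "('a \<Rightarrow> 'a \<Rightarrow> bool) \<Rightarrow> ('b \<Rightarrow> 'b \<Rightarrow> bool) \<Rightarrow> 'a \<times> 'b \<Rightarrow> 'a \<times> 'b \<Rightarrow> bool" where
  "cprod_E EG EH p q \<longleftrightarrow>
     (snd p = snd q \<and> EG (fst p) (fst q)) \<or> (fst p = fst q \<and> EH (snd p) (snd q))"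

end

theory Submission
  imports Defs
begin

text \<open>
  Distances add in the cartesian product: d((a, i), (b, j)) = d_C(a, b) + |i - j|, where d_C
  is the cycle distance. Two landmarks q1, q2 never doubly resolve: they separate x from y
  only if d(x, q1) - d(x, q2) differs from d(y, q1) - d(y, q2), but this difference lies in
  [-D, D] for the diameter D = (n - 1)/2 + k - 1, and 2D + 1 = n + 2k - 2 < nk.
  Three landmarks suffice: (0, 0) and (0, k - 1) see the path coordinate with opposite signs,
  which forces i = j; then (0, 0) and ((n - 1)/2, 0) determine the cycle coordinate, because
  a \<mapsto> d_C(a, 0) - d_C(a, (n - 1)/2) is injective on C_n for odd n.
\<close>

inductive walk_len :: "'a set \<Rightarrow> ('a \<Rightarrow> 'a \<Rightarrow> bool) \<Rightarrow> 'a \<Rightarrow> 'a \<Rightarrow> nat \<Rightarrow> bool"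
  for V E where
  refl: "u \<in> V \<Longrightarrow> walk_len V E u u 0"
| step: "u \<in> V \<Longrightarrow> E u v \<Longrightarrow> walk_len V E v w m \<Longrightarrow> walk_len V E u w (Suc m)"

lemma is_walk_singleton: "is_walk E V [x] \<longleftrightarrow> x \<in> V"
  by (auto simp: is_walk_def)

lemma is_walk_Cons_Cons:
  "is_walk E V (x # y # ys) \<longleftrightarrow> x \<in> V \<and> E x y \<and> is_walk E V (y # ys)"
  by (auto simp: is_walk_def nth_Cons' less_Suc_eq_0_disj)

lemma walk_len_if_is_walk:
  "is_walk E V xs \<Longrightarrow> walk_len V E (hd xs) (last xs) (length xs - 1)"
proof (induction xs rule: induct_list012)
  case 1
  then show ?case by (simp add: is_walk_def)
next
  case (2 x)
  then show ?case by (simp add: is_walk_singleton walk_len.refl)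
next
  case (3 x y zs)
  then show ?case
    using walk_len.step[of x V E y "last (y # zs)" "length zs"] by (simp add: is_walk_Cons_Cons)
qed

lemma is_walk_if_walk_len:
  "walk_len V E u v m \<Longrightarrow> \<exists>xs. is_walk E V xs \<and> hd xs = u \<and> last xs = v \<and> length xs = Suc m"
proof (induction rule: walk_len.induct)
  case (refl u)
  then show ?case by (intro exI[of _ "[u]"]) (simp add: is_walk_singleton)
next
  case (step u v w m)
  then obtain ys where "is_walk E V (v # ys)" "last (v # ys) = w" "length ys = m"
    by (metis Suc_length_conv list.sel(1))
  with step.hyps show ?case by (intro exI[of _ "u # v # ys"]) (simp add: is_walk_Cons_Cons)
qed

lemma gdist_eq_Least_walk_len: "gdist V E u v = (LEAST m. walk_len V E u v m)"
  unfolding gdist_def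
  by (metis (lifting) walk_len_if_is_walk is_walk_if_walk_len diff_Suc_1)

lemma gdist_eqI:
  "walk_len V E u v d \<Longrightarrow> (\<And>m. walk_len V E u v m \<Longrightarrow> d \<le> m) \<Longrightarrow> gdist V E u v = d"
  unfolding gdist_eq_Least_walk_len by (rule Least_equality)

lemma walk_len_snoc:
  "walk_len V E u v m \<Longrightarrow> E v w \<Longrightarrow> w \<in> V \<Longrightarrow> walk_len V E u w (Suc m)"
  by (induction rule: walk_len.induct) (auto intro: walk_len.intros)

lemma walk_len_trans:
  "walk_len V E u v m \<Longrightarrow> walk_len V E v w p \<Longrightarrow> walk_len V E u w (m + p)"
  by (induction rule: walk_len.induct) (auto intro: walk_len.intros)

lemma walk_len_sym:
  assumes "walk_len V E u v m" and "\<And>x y. E x y \<Longrightarrow> E y x"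
  shows "walk_len V E v u m"
  using assms by (induction rule: walk_len.induct) (auto intro: walk_len.refl walk_len_snoc)

lemma walk_len_potential_le:
  assumes "walk_len V E u v m"
    and "\<And>x y. x \<in> V \<Longrightarrow> y \<in> V \<Longrightarrow> E x y \<Longrightarrow> h x \<le> h y + 1"
  shows "h u \<le> h v + m"
  using assms
proof (induction rule: walk_len.induct)
  case (step u v w m)
  then have "h u \<le> h v + 1" by (metis walk_len.cases)
  with step show ?case by simp
qed simp

lemma subset_pair_if_card_le_2:
  assumes "finite Q" "card Q \<le> 2" "Q \<subseteq> A" "A \<noteq> {}"
  obtains q1 q2 where "q1 \<in> A" "q2 \<in> A" "Q \<subseteq> {q1, q2}"
proof -
  consider "card Q = 0" | "card Q = 1" | "card Q = 2" using assms(2) by linarith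
  then show ?thesis
  proof cases
    case 1
    then show ?thesis using that assms by fastforce
  next
    case 2
    then show ?thesis using that assms by (metis card_1_singletonE insert_subset subset_insertI)
  next
    case 3
    then show ?thesis using that assms by (metis card_2_iff insert_subset subset_refl)
  qed
qed

lemma card_ge_3_if_doubly_resolving:
  assumes "finite V" and diam: "\<And>x y. x \<in> V \<Longrightarrow> y \<in> V \<Longrightarrow> gdist V E x y \<le> D"
    and small_diam: "2 * D + 1 < card V"
    and dr: "doubly_resolving V E Q" and "finite Q"
  shows "3 \<le> card Q"
proof (rule ccontr)
  assume "\<not> 3 \<le> card Q"
  then have "card Q \<le> 2" by simp
  moreover have "Q \<subseteq> V" using dr by (simp add: doubly_resolving_def)
  moreover have "V \<noteq> {}" using small_diam by auto
  ultimately obtain q1 q2 where q: "q1 \<in> V" "q2 \<in> V" "Q \<subseteq> {q1, q2}"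
    using \<open>finite Q\<close> subset_pair_if_card_le_2 by metis
  define f where "f x = int (gdist V E x q1) - int (gdist V E x q2)" for x
  have "f ` V \<subseteq> {- int D..int D}"
    using diam q unfolding f_def by (force simp: of_nat_le_iff)
  then have "\<not> inj_on f V"
    using card_inj_on_le[of f V "{- int D..int D}"] small_diam by auto
  then obtain x y where xy: "x \<in> V" "y \<in> V" "x \<noteq> y" and "f x = f y"
    by (auto simp: inj_on_def)
  then have "\<forall>q\<in>Q. int (gdist V E x q) - int (gdist V E y q)
      = int (gdist V E x q1) - int (gdist V E y q1)"
    using q(3) unfolding f_def by auto
  with xy dr show False unfolding doubly_resolving_def by blast
qed

definition path_dist :: "nat \<Rightarrow> nat \<Rightarrow> nat" where
  "path_dist i j = (if i \<le> j then j - i else i - j)"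

definition cycle_dist :: "nat \<Rightarrow> nat \<Rightarrow> nat \<Rightarrow> nat" where
  "cycle_dist n a b = min (path_dist a b) (n - path_dist a b)"

lemma cycle_E_iff:
  "cycle_E n a c \<longleftrightarrow> a < n \<and> c < n \<and>
     (a + 1 = n \<and> c = 0 \<or> a + 1 < n \<and> c = a + 1 \<or> c + 1 = n \<and> a = 0 \<or> c + 1 < n \<and> a = c + 1)"
  unfolding cycle_E_def by (auto simp: mod_Suc)

lemma cycle_dist_le_Suc_if_cycle_E:
  "cycle_E n a c \<Longrightarrow> b < n \<Longrightarrow> cycle_dist n a b \<le> cycle_dist n c b + 1"
  unfolding cycle_E_iff cycle_dist_def path_dist_def by auto

lemma path_dist_le_Suc_if_path_E: "path_E k i j \<Longrightarrow> path_dist i l \<le> path_dist j l + 1"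
  unfolding path_E_def path_dist_def by auto

lemma cycle_dist_le_half:
  "odd n \<Longrightarrow> a < n \<Longrightarrow> b < n \<Longrightarrow> cycle_dist n a b \<le> (n - 1) div 2"
  unfolding cycle_dist_def path_dist_def by (auto elim!: oddE)

lemma path_dist_le: "i < k \<Longrightarrow> j < k \<Longrightarrow> path_dist i j \<le> k - 1"
  unfolding path_dist_def by auto

abbreviation cyl_V :: "nat \<Rightarrow> nat \<Rightarrow> (nat \<times> nat) set" where
  "cyl_V n k \<equiv> cprod_V (cycle_V n) (path_V k)"

abbreviation cyl_E :: "nat \<Rightarrow> nat \<Rightarrow> nat \<times> nat \<Rightarrow> nat \<times> nat \<Rightarrow> bool" where
  "cyl_E n k \<equiv> cprod_E (cycle_E n) (path_E k)"

lemma mem_cyl_V: "x \<in> cyl_V n k \<longleftrightarrow> fst x < n \<and> snd x < k"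
  by (cases x) (simp add: cprod_V_def cycle_V_def path_V_def)

lemma cyl_E_iff:
  "cyl_E n k (a, i) (b, j) \<longleftrightarrow> i = j \<and> cycle_E n a b \<or> a = b \<and> path_E k i j"
  by (simp add: cprod_E_def)

lemma cyl_E_sym: "cyl_E n k x y \<Longrightarrow> cyl_E n k y x"
  by (auto simp: cprod_E_def cycle_E_def path_E_def)

lemma walk_len_cyl_sym:
  "walk_len (cyl_V n k) (cyl_E n k) u v m \<Longrightarrow> walk_len (cyl_V n k) (cyl_E n k) v u m"
  using walk_len_sym cyl_E_sym by metis

lemma walk_len_row_up:
  "a + t < n \<Longrightarrow> i < k \<Longrightarrow> walk_len (cyl_V n k) (cyl_E n k) (a, i) (a + t, i) t"
proof (induction t arbitrary: a)
  case 0
  then show ?case by (simp add: walk_len.refl mem_cyl_V)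
next
  case (Suc t)
  have "cyl_E n k (a, i) (Suc a, i)" using Suc.prems by (simp add: cyl_E_iff cycle_E_def)
  moreover have "walk_len (cyl_V n k) (cyl_E n k) (Suc a, i) (Suc a + t, i) t"
    using Suc.IH[of "Suc a"] Suc.prems by simp
  ultimately show ?case using Suc.prems by (simp add: walk_len.step mem_cyl_V)
qed

lemma walk_len_column_up:
  "i + t < k \<Longrightarrow> a < n \<Longrightarrow> walk_len (cyl_V n k) (cyl_E n k) (a, i) (a, i + t) t"
proof (induction t arbitrary: i)
  case 0
  then show ?case by (simp add: walk_len.refl mem_cyl_V)
next
  case (Suc t)
  have "cyl_E n k (a, i) (a, Suc i)" using Suc.prems by (simp add: cyl_E_iff path_E_def)
  moreover have "walk_len (cyl_V n k) (cyl_E n k) (a, Suc i) (a, Suc i + t) t"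
    using Suc.IH[of "Suc i"] Suc.prems by simp
  ultimately show ?case using Suc.prems by (simp add: walk_len.step mem_cyl_V)
qed

lemma walk_len_row:
  "a < n \<Longrightarrow> b < n \<Longrightarrow> i < k \<Longrightarrow>
    walk_len (cyl_V n k) (cyl_E n k) (a, i) (b, i) (path_dist a b)"
  using walk_len_row_up[of a "b - a" n i k]
    walk_len_cyl_sym[OF walk_len_row_up[of b "a - b" n i k]]
  by (cases "a \<le> b") (simp_all add: path_dist_def)

lemma walk_len_column:
  "a < n \<Longrightarrow> i < k \<Longrightarrow> j < k \<Longrightarrow>
    walk_len (cyl_V n k) (cyl_E n k) (a, i) (a, j) (path_dist i j)"
  using walk_len_column_up[of i "j - i" k a n]
    walk_len_cyl_sym[OF walk_len_column_up[of j "i - j" k a n]]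
  by (cases "i \<le> j") (simp_all add: path_dist_def)

text \<open>The row walk from a down to 0, across the edge from 0 to n - 1, and down to b.\<close>
lemma walk_len_row_around:
  assumes "a \<le> b" "b < n" "i < k"
  shows "walk_len (cyl_V n k) (cyl_E n k) (a, i) (b, i) (n - (b - a))"
proof -
  have "walk_len (cyl_V n k) (cyl_E n k) (a, i) (0, i) a"
    using walk_len_row[of a n 0 i k] assms by (simp add: path_dist_def split: if_split_asm)
  moreover have "walk_len (cyl_V n k) (cyl_E n k) (0, i) (b, i) (Suc (n - 1 - b))"
  proof (rule walk_len.step)
    show "cyl_E n k (0, i) (n - 1, i)" using assms by (simp add: cyl_E_iff cycle_E_def)
    show "walk_len (cyl_V n k) (cyl_E n k) (n - 1, i) (b, i) (n - 1 - b)"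
      using walk_len_row[of "n - 1" n b i k] assms by (simp add: path_dist_def split: if_split_asm)
  qed (use assms in \<open>simp add: mem_cyl_V\<close>)
  ultimately have "walk_len (cyl_V n k) (cyl_E n k) (a, i) (b, i) (a + Suc (n - 1 - b))"
    by (rule walk_len_trans)
  moreover have "a + Suc (n - 1 - b) = n - (b - a)" using assms by simp
  ultimately show ?thesis by metis
qed

lemma walk_len_row_cycle_dist:
  assumes "a < n" "b < n" "i < k"
  shows "walk_len (cyl_V n k) (cyl_E n k) (a, i) (b, i) (cycle_dist n a b)"
proof (cases "path_dist a b \<le> n - path_dist a b")
  case True
  then show ?thesis using walk_len_row[OF assms] by (simp add: cycle_dist_def)
next
  case False
  then have "cycle_dist n a b = n - path_dist a b" by (simp add: cycle_dist_def)
  then show ?thesis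
    using assms walk_len_row_around[of a b n i k]
      walk_len_cyl_sym[OF walk_len_row_around[of b a n i k]]
    by (cases "a \<le> b") (simp_all add: path_dist_def)
qed

lemma gdist_cyl:
  assumes "a < n" "b < n" "i < k" "j < k"
  shows "gdist (cyl_V n k) (cyl_E n k) (a, i) (b, j) = cycle_dist n a b + path_dist i j"
proof (rule gdist_eqI)
  show "walk_len (cyl_V n k) (cyl_E n k) (a, i) (b, j) (cycle_dist n a b + path_dist i j)"
    using walk_len_trans[OF walk_len_row_cycle_dist walk_len_column] assms by simp
next
  fix m
  \<comment> \<open>the claimed distance to (b, j) changes by at most 1 along each edge\<close>
  define h where "h x = cycle_dist n (fst x) b + path_dist (snd x) j" for x :: "nat \<times> nat"
  assume "walk_len (cyl_V n k) (cyl_E n k) (a, i) (b, j) m"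
  then have "h (a, i) \<le> h (b, j) + m"
  proof (rule walk_len_potential_le)
    fix x y
    assume "cyl_E n k x y"
    then show "h x \<le> h y + 1"
      using assms cycle_dist_le_Suc_if_cycle_E path_dist_le_Suc_if_path_E
      by (cases x; cases y) (fastforce simp: cyl_E_iff h_def)
  qed
  then show "cycle_dist n a b + path_dist i j \<le> m"
    by (simp add: h_def cycle_dist_def path_dist_def)
qed

lemma inj_on_cycle_dist_0_minus_cycle_dist_mid:
  "inj_on (\<lambda>a. int (cycle_dist (2 * m + 1) a 0) - int (cycle_dist (2 * m + 1) a m)) {..<2 * m + 1}"
proof (rule inj_onI)
  have diff_eq: "int (cycle_dist (2 * m + 1) c 0) - int (cycle_dist (2 * m + 1) c m)
      = (if c \<le> m then 2 * int c - int m else 3 * int m + 1 - 2 * int c)"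
    if "c < 2 * m + 1" for c
    using that by (auto simp: cycle_dist_def path_dist_def)
  fix a b
  assume "a \<in> {..<2 * m + 1}" "b \<in> {..<2 * m + 1}"
    and "int (cycle_dist (2 * m + 1) a 0) - int (cycle_dist (2 * m + 1) a m)
       = int (cycle_dist (2 * m + 1) b 0) - int (cycle_dist (2 * m + 1) b m)"
  \<comment> \<open>the two branches of \<open>diff_eq\<close> take values of opposite parity\<close>
  then show "a = b"
    using diff_eq[of a] diff_eq[of b] by (auto split: if_splits) presburger+
qed

lemma card_cyl_V: "card (cyl_V n k) = n * k"
  by (simp add: cprod_V_def cycle_V_def path_V_def card_cartesian_product)

lemma gdist_cyl_le_diam:
  assumes "odd n" "x \<in> cyl_V n k" "y \<in> cyl_V n k"
  shows "gdist (cyl_V n k) (cyl_E n k) x y \<le> (n - 1) div 2 + (k - 1)"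
  using assms gdist_cyl[of "fst x" n "fst y" "snd x" k "snd y"]
    cycle_dist_le_half[of n "fst x" "fst y"] path_dist_le[of "snd x" k "snd y"]
  by (simp add: mem_cyl_V, linarith)

lemma doubly_resolving_cyl:
  assumes "odd n" "0 < k"
  shows "doubly_resolving (cyl_V n k) (cyl_E n k) {(0, 0), (0, k - 1), ((n - 1) div 2, 0)}"
  unfolding doubly_resolving_def
proof (intro conjI ballI impI notI)
  define m where "m = (n - 1) div 2"
  have n: "n = 2 * m + 1" using assms by (auto simp: m_def elim!: oddE)
  show "{(0, 0), (0, k - 1), ((n - 1) div 2, 0)} \<subseteq> cyl_V n k"
    using n assms by (auto simp: mem_cyl_V)
  fix x y
  assume "x \<in> cyl_V n k" "y \<in> cyl_V n k" "x \<noteq> y"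
  then obtain a i b j where xy: "x = (a, i)" "y = (b, j)" "(a, i) \<noteq> (b, j)"
    and ab: "a < n" "b < n" and ij: "i < k" "j < k"
    by (cases x, cases y) (auto simp: mem_cyl_V)
  let ?d = "gdist (cyl_V n k) (cyl_E n k)"
  assume "\<exists>lam. \<forall>q\<in>{(0, 0), (0, k - 1), ((n - 1) div 2, 0)}. int (?d x q) - int (?d y q) = lam"
  then obtain lam where lam: "int (?d x q) - int (?d y q) = lam"
    if "q \<in> {(0, 0), (0, k - 1), (m, 0)}" for q
    by (auto simp: m_def)
  have landmark: "int (?d x (c, l)) - int (?d y (c, l))
      = int (cycle_dist n a c) + int (path_dist i l) - int (cycle_dist n b c) - int (path_dist j l)"
    if "c < n" "l < k" for c l
    using that xy(1,2) ab ij gdist_cyl by simp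
  have "int (path_dist i 0) - int (path_dist j 0)
      = int (path_dist i (k - 1)) - int (path_dist j (k - 1))"
    using lam[of "(0, 0)"] lam[of "(0, k - 1)"] landmark[of 0 0] landmark[of 0 "k - 1"] n assms
    by simp
  then have "i = j"
    using ij by (auto simp: path_dist_def split: if_splits)
  then have "int (cycle_dist n a 0) - int (cycle_dist n a m)
      = int (cycle_dist n b 0) - int (cycle_dist n b m)"
    using lam[of "(0, 0)"] lam[of "(m, 0)"] landmark[of 0 0] landmark[of m 0] n assms
    by simp
  then have "a = b"
    using inj_on_cycle_dist_0_minus_cycle_dist_mid[of m] ab n by (auto dest: inj_onD)
  with \<open>i = j\<close> xy show False by simp
qed

theorem theorem3p1:
  fixes n k :: nat
  assumes "n \<ge> 3" and "odd n" and "k \<ge> 3"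
  shows "psi (cprod_V (cycle_V n) (path_V k)) (cprod_E (cycle_E n) (path_E k)) = 3"
proof -
  let ?Q = "{(0, 0), (0, k - 1), ((n - 1) div 2, 0)} :: (nat \<times> nat) set"
  have "card ?Q = 3" using assms by auto
  moreover have "doubly_resolving (cyl_V n k) (cyl_E n k) ?Q"
    using assms doubly_resolving_cyl[of n k] by simp
  moreover have "2 * ((n - 1) div 2 + (k - 1)) + 1 < card (cyl_V n k)"
  proof -
    obtain n' k' where "n = n' + 3" "k = k' + 3" using assms by (metis le_add_diff_inverse2)
    then show ?thesis using \<open>odd n\<close> by (auto simp: card_cyl_V algebra_simps elim!: oddE)
  qed
  then have "3 \<le> card Q" if "finite Q" "doubly_resolving (cyl_V n k) (cyl_E n k) Q" for Q
    using that card_ge_3_if_doubly_resolving[OF _ gdist_cyl_le_diam[OF \<open>odd n\<close>]]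
    by (simp add: cprod_V_def cycle_V_def path_V_def)
  ultimately show ?thesis
    unfolding psi_def by (intro Least_equality exI[of _ ?Q]) auto
qed

end
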